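(* Let $n$ be a positive integer and let $$A_n' := \{(0,S_1,\dots,S_{2n}) \in \mathbb{Z}^{2n+1} : |S_i - S_{i-1}| = 1 \text{ for } 1\le i\le 2n \ (S_0=0),\ S_1>0,\ S_{2n}=0\},$$ $$B_n' := \{(0,S_1,\dots,S_{2n}) \in \mathbb{Z}^{2n+1} : |S_i - S_{i-1}| = 1 \text{ for } 1\le i\le 2n \ (S_0=0),\ S_i>0 \text{ for all } 1\le i\le 2n\}.$$ For $(0,S_1,\dots,S_{2n})\in A_n'$, let $M:=\max\{S_1,\dots,S_{2n}\}$, let $a_M:=\min\{1\le i\le 2n: S_i=M\}$, $b_0:=0$, and for $k=M-1,M-2,\dots,1$ define inductively $$a_k:=\min\{1\le i\le a_{k+1}: S_i=k\},\qquad b_k:=\max\{1\le i\le a_{k+1}: S_i=k\}.$$ For $\ell=1,\dots,2n$ define $$T_\ell:=\begin{cases}2m-S_\ell & \text{if } a_m\le \ell\le b_m \text{ for some } m\in\{1,\dots,M-1\},\\ 2M-S_\ell & \text{if } \ell\ge a_M,\end{cases}$$ and let $\Phi_1(0,S_1,\dots,S_{2n}):=(0,T_1,\dots,T_{2n})$. Then $\Phi_1$ is a well-defined map from $A_n'$ to $B_n'$ and it is a bijection between $A_n'$ and $B_n'$.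
   Context: These are paths of the $2n$-step simple random walk on $\mathbb{Z}$ started at the origin: $A_n'$ consists of paths whose first step is up and which end at $0$; $B_n'$ consists of paths staying strictly positive at all times $1,\dots,2n$. *)

theory Defs
  imports Main
begin

text \<open>A path (0,S_1,...,S_2n) is an int list of length 2n+1; entry i is S_i.\<close>

definition walk_path :: "nat \<Rightarrow> int list \<Rightarrow> bool" where
  "walk_path n S \<longleftrightarrow> length S = 2*n + 1 \<and> S!0 = 0 \<and>
     (\<forall>i\<in>{1..2*n}. \<bar>S!i - S!(i-1)\<bar> = 1)"

definition A' :: "nat \<Rightarrow> int list set" where
  "A' n = {S. walk_path n S \<and> S!1 > 0 \<and> S!(2*n) = 0}"

definition B' :: "nat \<Rightarrow> int list set" where
  "B' n = {S. walk_path n S \<and> (\<forall>i\<in>{1..2*n}. S!i > 0)}"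

definition maxh :: "nat \<Rightarrow> int list \<Rightarrow> int" where
  "maxh n S = Max ((\<lambda>i. S!i) ` {1..2*n})"

text \<open>aseq n S j = a_{M-j}, defined by downward recursion from a_M.\<close>
fun aseq :: "nat \<Rightarrow> int list \<Rightarrow> nat \<Rightarrow> nat" where
  "aseq n S 0 = (LEAST i. 1 \<le> i \<and> i \<le> 2*n \<and> S!i = maxh n S)"
| "aseq n S (Suc j) =
     (LEAST i. 1 \<le> i \<and> i \<le> aseq n S j \<and> S!i = maxh n S - int (Suc j))"

definition apt :: "nat \<Rightarrow> int list \<Rightarrow> int \<Rightarrow> nat" where
  "apt n S k = aseq n S (nat (maxh n S - k))"

definition bpt :: "nat \<Rightarrow> int list \<Rightarrow> int \<Rightarrow> nat" where
  "bpt n S k = (GREATEST i. 1 \<le> i \<and> i \<le> apt n S (k+1) \<and> S!i = k)"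

definition in_case :: "nat \<Rightarrow> int list \<Rightarrow> int \<Rightarrow> nat \<Rightarrow> bool" where
  "in_case n S m l \<longleftrightarrow>
     (1 \<le> m \<and> m \<le> maxh n S - 1 \<and> apt n S m \<le> l \<and> l \<le> bpt n S m) \<or>
     (m = maxh n S \<and> apt n S m \<le> l)"

definition Phi1 :: "nat \<Rightarrow> int list \<Rightarrow> int list" where
  "Phi1 n S = 0 # map (\<lambda>l. 2 * (THE m. in_case n S m l) - S!l) [1..<2*n+1]"

end

theory Submission
  imports Defs
begin

text \<open>
  \<open>Phi1\<close> is Pitman's transform \<open>T\<^sub>l = 2 R\<^sub>l - S\<^sub>l\<close>, where \<open>R\<^sub>l = max {S\<^sub>1, \<dots>, S\<^sub>l}\<close> is the
  running maximum: \<open>a\<^sub>k\<close> is the first hitting time of level \<open>k\<close> and \<open>b\<^sub>k = a\<^sub>k\<^sub>+\<^sub>1 - 1\<close>, so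
  \<open>l\<close> falls into the case indexed by \<open>m\<close> exactly when \<open>R\<^sub>l = m\<close>. Each step of \<open>T\<close> is \<open>\<plusminus>1\<close>,
  \<open>T\<^sub>l \<ge> R\<^sub>l \<ge> 1\<close> and \<open>T\<^sub>2\<^sub>n = 2M\<close>. Conversely \<open>R\<^sub>l = min (J\<^sub>l, M)\<close> with
  \<open>J\<^sub>l = min {T\<^sub>l, \<dots>, T\<^sub>2\<^sub>n}\<close> the future minimum of \<open>T\<close>, since \<open>S\<close> sits at level \<open>R\<^sub>l\<close> just
  before it first reaches \<open>R\<^sub>l + 1\<close>. Hence \<open>S\<^sub>l = 2 min (J\<^sub>l, T\<^sub>2\<^sub>n / 2) - T\<^sub>l\<close> inverts the
  transform on all of \<open>B'\<^sub>n\<close>.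
\<close>

lemma walk_path_step:
  assumes "walk_path n S" "i < 2*n"
  shows "\<bar>S!Suc i - S!i\<bar> = 1"
proof -
  have "Suc i \<in> {1..2*n}" using assms(2) by simp
  with assms(1) show ?thesis unfolding walk_path_def by fastforce
qed

lemma walk_path_nth_1:
  assumes "walk_path n S" "0 < n" "0 < S!1"
  shows "S!1 = 1"
  using walk_path_step[OF assms(1), of 0] assms by (simp add: walk_path_def)

lemma walk_path_parity:
  assumes "walk_path n S" "i \<le> 2*n"
  shows "even (S!i - int i)"
  using assms(2)
proof (induction i)
  case 0
  then show ?case using assms(1) by (simp add: walk_path_def)
next
  case (Suc i)
  then have "even (S!i - int i)" by simp
  moreover have "S!Suc i = S!i + 1 \<or> S!Suc i = S!i - 1"
    using walk_path_step[OF assms(1), of i] Suc.prems by auto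
  ultimately show ?case by auto
qed

lemma walk_path_intermediate_value:
  assumes "walk_path n S" "i \<le> j" "j \<le> 2*n" "S!i \<le> v" "v \<le> S!j"
  shows "\<exists>k\<in>{i..j}. S!k = v"
  using nat_intermed_int_val[of i j "\<lambda>k. S!k" v] walk_path_step[OF assms(1)] assms(2-)
  by fastforce

lemma last_visit_before:
  fixes f :: "nat \<Rightarrow> int"
  assumes "\<forall>i<l. \<bar>f (Suc i) - f i\<bar> \<le> 1" "f 0 < v" "v \<le> f l"
  shows "\<exists>i\<le>l. f i = v \<and> (\<forall>j. i < j \<and> j \<le> l \<longrightarrow> v < f j)"
  using assms
proof (induction l)
  case 0
  then show ?case by auto
next
  case (Suc l)
  show ?case
  proof (cases "f (Suc l) = v")
    case True
    then show ?thesis by auto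
  next
    case False
    with Suc.prems have "v \<le> f l" by force
    then obtain i where i: "i \<le> l" "f i = v" "\<forall>j. i < j \<and> j \<le> l \<longrightarrow> v < f j"
      using Suc.IH Suc.prems by auto
    then have "\<forall>j. i < j \<and> j \<le> Suc l \<longrightarrow> v < f j"
      using False Suc.prems(3) by (metis le_Suc_eq order_le_less)
    then show ?thesis using i by (intro exI[of _ i]) auto
  qed
qed

lemma nth_Cons_map_upt:
  "1 \<le> l \<Longrightarrow> l \<le> N \<Longrightarrow> (x # map f [1..<N+1]) ! l = f l"
  by (cases l) (simp_all del: upt_Suc add: nth_upt)

definition running_max :: "int list \<Rightarrow> nat \<Rightarrow> int" where
  "running_max S l = Max ((\<lambda>i. S!i) ` {1..l})"

lemma running_max_ge_iff:
  "1 \<le> l \<Longrightarrow> m \<le> running_max S l \<longleftrightarrow> (\<exists>i\<in>{1..l}. m \<le> S!i)"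
  unfolding running_max_def by (subst Max_ge_iff) auto

lemma running_max_le_iff:
  "1 \<le> l \<Longrightarrow> running_max S l \<le> m \<longleftrightarrow> (\<forall>i\<in>{1..l}. S!i \<le> m)"
  unfolding running_max_def by (subst Max_le_iff) auto

lemma nth_le_running_max: "1 \<le> i \<Longrightarrow> i \<le> l \<Longrightarrow> S!i \<le> running_max S l"
  using running_max_ge_iff[of l "S!i" S] by auto

lemma running_max_mono: "1 \<le> i \<Longrightarrow> i \<le> l \<Longrightarrow> running_max S i \<le> running_max S l"
  using running_max_le_iff[of i S "running_max S l"] nth_le_running_max[of _ l S] by auto

lemma running_max_1: "running_max S 1 = S!1"
  by (simp add: running_max_def)

lemma running_max_Suc: "1 \<le> l \<Longrightarrow> running_max S (Suc l) = max (running_max S l) (S!Suc l)"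
proof -
  assume "1 \<le> l"
  moreover have "{1..Suc l} = insert (Suc l) {1..l}" by auto
  ultimately show ?thesis unfolding running_max_def by (simp add: max.commute)
qed

lemma maxh_eq_running_max: "maxh n S = running_max S (2*n)"
  by (simp add: maxh_def running_max_def)

definition future_min :: "nat \<Rightarrow> int list \<Rightarrow> nat \<Rightarrow> int" where
  "future_min n T l = Min ((\<lambda>i. T!i) ` {l..2*n})"

lemma future_min_ge_iff:
  "l \<le> 2*n \<Longrightarrow> v \<le> future_min n T l \<longleftrightarrow> (\<forall>i\<in>{l..2*n}. v \<le> T!i)"
  unfolding future_min_def by (subst Min_ge_iff) auto

lemma future_min_le_iff:
  "l \<le> 2*n \<Longrightarrow> future_min n T l \<le> v \<longleftrightarrow> (\<exists>i\<in>{l..2*n}. T!i \<le> v)"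
  unfolding future_min_def by (subst Min_le_iff) auto

lemma future_min_le_nth: "l \<le> j \<Longrightarrow> j \<le> 2*n \<Longrightarrow> future_min n T l \<le> T!j"
  using future_min_le_iff[of l n T "T!j"] by auto

lemma future_min_mono: "i \<le> l \<Longrightarrow> l \<le> 2*n \<Longrightarrow> future_min n T i \<le> future_min n T l"
  using future_min_le_iff[of l n T "future_min n T l"] future_min_le_iff[of i n T "future_min n T l"]
  by auto

lemma future_min_Suc: "l < 2*n \<Longrightarrow> future_min n T l = min (T!l) (future_min n T (Suc l))"
proof -
  assume "l < 2*n"
  moreover from this have "{l..2*n} = insert l {Suc l..2*n}" by auto
  ultimately show ?thesis unfolding future_min_def by simp
qed

lemma future_min_last: "future_min n T (2*n) = T!(2*n)"
  by (simp add: future_min_def)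

definition pitman :: "nat \<Rightarrow> int list \<Rightarrow> int list" where
  "pitman n S = 0 # map (\<lambda>l. 2 * running_max S l - S!l) [1..<2*n+1]"

definition pitman_inv :: "nat \<Rightarrow> int list \<Rightarrow> int list" where
  "pitman_inv n T = 0 # map (\<lambda>l. 2 * min (future_min n T l) (T!(2*n) div 2) - T!l) [1..<2*n+1]"

lemma length_pitman [simp]: "length (pitman n S) = 2*n + 1"
  by (simp del: upt_Suc add: pitman_def)

lemma pitman_nth_0 [simp]: "pitman n S ! 0 = 0"
  by (simp del: upt_Suc add: pitman_def)

lemma pitman_nth: "1 \<le> l \<Longrightarrow> l \<le> 2*n \<Longrightarrow> pitman n S ! l = 2 * running_max S l - S!l"
  unfolding pitman_def by (rule nth_Cons_map_upt)

lemma length_pitman_inv [simp]: "length (pitman_inv n T) = 2*n + 1"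
  by (simp del: upt_Suc add: pitman_inv_def)

lemma pitman_inv_nth_0 [simp]: "pitman_inv n T ! 0 = 0"
  by (simp del: upt_Suc add: pitman_inv_def)

lemma pitman_inv_nth:
  "1 \<le> l \<Longrightarrow> l \<le> 2*n \<Longrightarrow>
    pitman_inv n T ! l = 2 * min (future_min n T l) (T!(2*n) div 2) - T!l"
  unfolding pitman_inv_def by (rule nth_Cons_map_upt)

lemma pitman_step:
  "\<bar>b - a\<bar> = 1 \<Longrightarrow> a \<le> r \<Longrightarrow> \<bar>(2 * max r b - b) - (2 * r - a)\<bar> = (1::int)"
  by (cases "r \<le> b"; cases "b < a"; cases "r = a"; simp add: max_def abs_if)

lemma pitman_inv_step:
  "\<bar>b - a\<bar> = 1 \<Longrightarrow> j \<le> b \<Longrightarrow> \<bar>(2 * min j N - b) - (2 * min (min a j) N - a)\<bar> = (1::int)"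
  by (cases "j \<le> N"; cases "a \<le> j"; cases "j = a"; cases "a \<le> N"; cases "b < a";
      simp add: min_def abs_if)

definition first_hit :: "nat \<Rightarrow> int list \<Rightarrow> int \<Rightarrow> nat" where
  "first_hit n S k = (LEAST i. 1 \<le> i \<and> i \<le> 2*n \<and> S!i = k)"

context
  fixes n :: nat and S :: "int list"
  assumes S_A': "S \<in> A' n" and n_pos: "0 < n"
begin

lemma A'_walk_path: "walk_path n S"
  using S_A' by (simp add: A'_def)

lemma A'_nth_1: "S!1 = 1"
  using walk_path_nth_1[OF A'_walk_path n_pos] S_A' by (simp add: A'_def)

lemma A'_nth_end: "S!(2*n) = 0"
  using S_A' by (simp add: A'_def)

lemma A'_running_max_bounds:
  assumes "1 \<le> l" "l \<le> 2*n"
  shows "1 \<le> running_max S l \<and> running_max S l \<le> maxh n S"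
  using nth_le_running_max[of 1 l S] A'_nth_1 assms running_max_mono[of l "2*n" S]
  by (auto simp: maxh_eq_running_max)

lemma A'_hits_level:
  assumes "1 \<le> l" "l \<le> 2*n" "1 \<le> m" "m \<le> running_max S l"
  shows "\<exists>i\<in>{1..l}. S!i = m"
proof -
  obtain i where i: "i\<in>{1..l}" "m \<le> S!i" using running_max_ge_iff assms by blast
  then have "\<exists>j\<in>{1..i}. S!j = m"
    using walk_path_intermediate_value[OF A'_walk_path, of 1 i m] A'_nth_1 assms by auto
  then show ?thesis using i by auto
qed

lemma first_hit_props:
  assumes "1 \<le> m" "m \<le> maxh n S"
  shows "1 \<le> first_hit n S m \<and> first_hit n S m \<le> 2*n \<and> S!(first_hit n S m) = m"
proof -
  have "\<exists>i\<in>{1..2*n}. S!i = m"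
    using A'_hits_level[of "2*n" m] assms n_pos by (auto simp: maxh_eq_running_max)
  then have "\<exists>i. 1 \<le> i \<and> i \<le> 2*n \<and> S!i = m" by auto
  from LeastI_ex[OF this] show ?thesis unfolding first_hit_def .
qed

lemma first_hit_le_iff:
  assumes "1 \<le> m" "m \<le> maxh n S" "1 \<le> l" "l \<le> 2*n"
  shows "first_hit n S m \<le> l \<longleftrightarrow> m \<le> running_max S l"
proof
  assume "first_hit n S m \<le> l"
  then show "m \<le> running_max S l"
    using first_hit_props[OF assms(1,2)] nth_le_running_max[of "first_hit n S m" l S] by auto
next
  assume "m \<le> running_max S l"
  then obtain i where "i\<in>{1..l}" "S!i = m" using A'_hits_level assms by blast
  moreover from this have "first_hit n S m \<le> i"
    unfolding first_hit_def using assms by (intro Least_le) auto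
  ultimately show "first_hit n S m \<le> l" by auto
qed

lemma before_first_hit:
  assumes "1 \<le> k" "k < maxh n S"
  defines "a \<equiv> first_hit n S (k+1)"
  shows "2 \<le> a \<and> S!(a-1) = k \<and> running_max S (a-1) = k"
proof -
  have a: "1 \<le> a \<and> a \<le> 2*n \<and> S!a = k+1"
    using first_hit_props[of "k+1"] assms unfolding a_def by auto
  then have a2: "2 \<le> a" using A'_nth_1 assms(1) by (cases "a = 1") auto
  have "\<not> a \<le> a - 1" using a2 by simp
  then have "\<not> k + 1 \<le> running_max S (a-1)"
    using first_hit_le_iff[of "k+1" "a-1"] a a2 assms(1,2) unfolding a_def by auto
  then have "running_max S (a-1) \<le> k" by simp
  moreover have "S!(a-1) \<le> running_max S (a-1)"
    using nth_le_running_max[of "a-1" "a-1" S] a2 by auto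
  moreover have "\<bar>S!Suc (a-1) - S!(a-1)\<bar> = 1"
    using walk_path_step[OF A'_walk_path, of "a-1"] a a2 by auto
  ultimately show ?thesis using a a2 by auto
qed

lemma aseq_eq_first_hit: "int j < maxh n S \<Longrightarrow> aseq n S j = first_hit n S (maxh n S - int j)"
proof (induction j)
  case 0
  then show ?case by (simp add: first_hit_def)
next
  case (Suc j)
  define k where "k = maxh n S - int (Suc j)"
  have k: "1 \<le> k" "k < maxh n S" using Suc.prems k_def by auto
  define a where "a = first_hit n S (k+1)"
  have "aseq n S j = a" using Suc k_def a_def by auto
  then have "aseq n S (Suc j) = (LEAST i. 1 \<le> i \<and> i \<le> a \<and> S!i = k)"
    using k_def by simp
  also have "\<dots> = first_hit n S k"
  proof (rule Least_equality)
    have "first_hit n S k \<le> a - 1"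
      using first_hit_le_iff[of k "a-1"] before_first_hit[OF k] first_hit_props[of "k+1"] k
      unfolding a_def by auto
    then show "1 \<le> first_hit n S k \<and> first_hit n S k \<le> a \<and> S ! first_hit n S k = k"
      using first_hit_props[of k] k by auto
  next
    fix y assume "1 \<le> y \<and> y \<le> a \<and> S ! y = k"
    then have "1 \<le> y \<and> y \<le> 2*n \<and> S!y = k"
      using first_hit_props[of "k+1"] k unfolding a_def by auto
    then show "first_hit n S k \<le> y" unfolding first_hit_def by (rule Least_le)
  qed
  finally show ?case using k_def by simp
qed

lemma apt_eq_first_hit: "1 \<le> k \<Longrightarrow> k \<le> maxh n S \<Longrightarrow> apt n S k = first_hit n S k"
  unfolding apt_def using aseq_eq_first_hit[of "nat (maxh n S - k)"] by auto

lemma bpt_eq_first_hit: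
  assumes "1 \<le> k" "k < maxh n S"
  shows "bpt n S k = first_hit n S (k+1) - 1"
proof -
  define a where "a = first_hit n S (k+1)"
  have a: "S!a = k+1" using first_hit_props[of "k+1"] assms a_def by auto
  have "bpt n S k = (GREATEST i. 1 \<le> i \<and> i \<le> a \<and> S!i = k)"
    unfolding bpt_def a_def using apt_eq_first_hit[of "k+1"] assms by auto
  also have "\<dots> = a - 1"
  proof (rule Greatest_equality)
    show "1 \<le> a - 1 \<and> a - 1 \<le> a \<and> S ! (a - 1) = k"
      using before_first_hit[OF assms] a_def by auto
  next
    fix y assume "1 \<le> y \<and> y \<le> a \<and> S ! y = k"
    moreover from this have "y \<noteq> a" using a by auto
    ultimately show "y \<le> a - 1" by auto
  qed
  finally show ?thesis using a_def by simp
qed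

lemma in_case_iff_running_max:
  assumes "1 \<le> l" "l \<le> 2*n"
  shows "in_case n S m l \<longleftrightarrow> m = running_max S l"
proof -
  define M where "M = maxh n S"
  have R: "1 \<le> running_max S l" "running_max S l \<le> M"
    using A'_running_max_bounds assms M_def by auto
  have inner: "(1 \<le> m \<and> m \<le> M - 1 \<and> apt n S m \<le> l \<and> l \<le> bpt n S m) \<longleftrightarrow>
               (1 \<le> m \<and> m \<le> M - 1 \<and> m = running_max S l)"
  proof (cases "1 \<le> m \<and> m \<le> M - 1")
    case True
    have "apt n S m \<le> l \<longleftrightarrow> m \<le> running_max S l"
      using apt_eq_first_hit[of m] first_hit_le_iff[of m l] True assms M_def by auto
    moreover have "l \<le> bpt n S m \<longleftrightarrow> \<not> m + 1 \<le> running_max S l"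
      using bpt_eq_first_hit[of m] first_hit_le_iff[of "m+1" l] first_hit_props[of "m+1"]
        True assms M_def by auto
    ultimately show ?thesis using True by auto
  qed auto
  have top: "(m = M \<and> apt n S m \<le> l) \<longleftrightarrow> (m = M \<and> m = running_max S l)"
    using apt_eq_first_hit[of M] first_hit_le_iff[of M l] R assms M_def by auto
  show ?thesis unfolding in_case_def M_def[symmetric] inner top using R by auto
qed

lemma Phi1_eq_pitman: "Phi1 n S = pitman n S"
  unfolding Phi1_def pitman_def
proof (rule arg_cong[where f="\<lambda>x. 0 # x"], rule map_cong[OF refl])
  fix l assume "l \<in> set [1..<2*n+1]"
  then have "in_case n S m l \<longleftrightarrow> m = running_max S l" for m
    using in_case_iff_running_max[of l m] by auto
  then have "(THE m. in_case n S m l) = running_max S l" by simp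
  then show "2 * (THE m. in_case n S m l) - S ! l = 2 * running_max S l - S ! l" by simp
qed

lemma pitman_in_B': "pitman n S \<in> B' n"
proof -
  have steps: "\<bar>pitman n S ! i - pitman n S ! (i-1)\<bar> = 1" if i: "i \<in> {1..2*n}" for i
  proof (cases "i = 1")
    case True
    then show ?thesis using pitman_nth[of 1 n S] running_max_1 A'_nth_1 n_pos by simp
  next
    case False
    then obtain j where j: "i = Suc j" "1 \<le> j" using i by (cases i) auto
    have "pitman n S ! i = 2 * max (running_max S j) (S!Suc j) - S!Suc j"
      using pitman_nth[of i n S] running_max_Suc[of j S] i j by auto
    moreover have "pitman n S ! (i-1) = 2 * running_max S j - S!j"
      using pitman_nth[of j n S] i j by auto
    moreover have "\<bar>S!Suc j - S!j\<bar> = 1" using walk_path_step[OF A'_walk_path, of j] i j by auto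
    moreover have "S!j \<le> running_max S j" using nth_le_running_max[of j j S] j by auto
    ultimately show ?thesis using pitman_step by simp
  qed
  have "pitman n S ! i > 0" if "i \<in> {1..2*n}" for i
    using pitman_nth[of i n S] A'_running_max_bounds[of i] nth_le_running_max[of i i S] that
    by auto
  with steps show ?thesis unfolding B'_def walk_path_def by auto
qed

lemma min_future_min_pitman:
  assumes l: "1 \<le> l" "l \<le> 2*n"
  shows "min (future_min n (pitman n S) l) (maxh n S) = running_max S l"
proof -
  define R where "R = running_max S l"
  have R: "1 \<le> R" "R \<le> maxh n S" using A'_running_max_bounds[OF l] R_def by auto
  have lower: "R \<le> future_min n (pitman n S) l"
  proof (subst future_min_ge_iff[OF l(2)], intro ballI)
    fix i assume i: "i \<in> {l..2*n}"
    have "R \<le> running_max S i" using running_max_mono[of l i S] l i R_def by auto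
    moreover have "S!i \<le> running_max S i" using nth_le_running_max[of i i S] l i by auto
    ultimately show "R \<le> pitman n S ! i" using pitman_nth[of i n S] l i by auto
  qed
  show ?thesis
  proof (cases "R = maxh n S")
    case False
    then have R_lt: "R < maxh n S" using R by simp
    define a where "a = first_hit n S (R+1)"
    have "\<not> a \<le> l" using first_hit_le_iff[of "R+1" l] R_lt R l R_def a_def by auto
    moreover have a: "2 \<le> a \<and> S!(a-1) = R \<and> running_max S (a-1) = R"
      using before_first_hit[OF R(1) R_lt] a_def by simp
    moreover have "a \<le> 2*n" using first_hit_props[of "R+1"] R_lt R a_def by auto
    ultimately have "pitman n S ! (a-1) = R" "l \<le> a - 1" "a - 1 \<le> 2*n"
      using pitman_nth[of "a-1" n S] l by auto
    then have "future_min n (pitman n S) l \<le> R"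
      using future_min_le_nth[of l "a-1" n "pitman n S"] by auto
    then show ?thesis using lower R R_def by simp
  qed (use lower R_def in simp)
qed

lemma pitman_inv_pitman: "pitman_inv n (pitman n S) = S"
proof (rule nth_equalityI)
  show "length (pitman_inv n (pitman n S)) = length S"
    using A'_walk_path by (simp add: walk_path_def)
next
  fix i assume "i < length (pitman_inv n (pitman n S))"
  then have i: "i \<le> 2*n" by simp
  have half_end: "pitman n S ! (2*n) div 2 = maxh n S"
    using pitman_nth[of "2*n" n S] n_pos A'_nth_end by (simp add: maxh_eq_running_max)
  show "pitman_inv n (pitman n S) ! i = S ! i"
  proof (cases "i = 0")
    case True
    then show ?thesis using A'_walk_path by (simp add: walk_path_def)
  next
    case False
    then show ?thesis
      using pitman_inv_nth[of i n] half_end min_future_min_pitman[of i] pitman_nth[of i n S] i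
      by simp
  qed
qed

end

context
  fixes n :: nat and T :: "int list"
  assumes T_B': "T \<in> B' n" and n_pos: "0 < n"
begin

lemma B'_walk_path: "walk_path n T"
  using T_B' by (simp add: B'_def)

lemma B'_nth_0: "T!0 = 0"
  using B'_walk_path by (simp add: walk_path_def)

lemma B'_nth_pos: "1 \<le> i \<Longrightarrow> i \<le> 2*n \<Longrightarrow> 0 < T!i"
  using T_B' by (auto simp: B'_def)

lemma B'_nth_1: "T!1 = 1"
  using walk_path_nth_1[OF B'_walk_path n_pos] B'_nth_pos[of 1] n_pos by simp

lemma B'_nth_end: "T!(2*n) = 2 * (T!(2*n) div 2) \<and> 1 \<le> T!(2*n) div 2"
  using walk_path_parity[OF B'_walk_path, of "2*n"] B'_nth_pos[of "2*n"] n_pos by auto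

lemma B'_future_min_pos:
  assumes "1 \<le> l" "l \<le> 2*n"
  shows "1 \<le> future_min n T l"
proof -
  have "\<forall>i\<in>{l..2*n}. 1 \<le> T!i"
    using B'_nth_pos assms by (metis atLeastAtMost_iff int_one_le_iff_zero_less order_trans)
  then show ?thesis using future_min_ge_iff[of l n 1 T] assms by simp
qed

lemma pitman_inv_in_A': "pitman_inv n T \<in> A' n"
proof -
  define N where "N = T!(2*n) div 2"
  have q1: "pitman_inv n T ! 1 = 1"
    using pitman_inv_nth[of 1 n T] n_pos future_min_le_nth[of 1 1 n T] B'_future_min_pos[of 1]
      B'_nth_1 B'_nth_end by auto
  have steps: "\<bar>pitman_inv n T ! i - pitman_inv n T ! (i-1)\<bar> = 1" if i: "i \<in> {1..2*n}" for i
  proof (cases "i = 1")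
    case True
    then show ?thesis using q1 by simp
  next
    case False
    then obtain j where j: "i = Suc j" "1 \<le> j" using i by (cases i) auto
    have "pitman_inv n T ! i = 2 * min (future_min n T (Suc j)) N - T!Suc j"
      using pitman_inv_nth[of i n T] i j N_def by auto
    moreover have "pitman_inv n T ! (i-1) = 2 * min (min (T!j) (future_min n T (Suc j))) N - T!j"
      using pitman_inv_nth[of j n T] future_min_Suc[of j n T] i j N_def by auto
    moreover have "\<bar>T!Suc j - T!j\<bar> = 1" using walk_path_step[OF B'_walk_path, of j] i j by auto
    moreover have "future_min n T (Suc j) \<le> T!Suc j"
      using future_min_le_nth[of "Suc j" "Suc j" n T] i j by auto
    ultimately show ?thesis using pitman_inv_step by simp
  qed
  have "pitman_inv n T ! (2*n) = 0"
    using pitman_inv_nth[of "2*n" n T] n_pos future_min_last[of n T] B'_nth_end by auto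
  with q1 steps show ?thesis unfolding A'_def walk_path_def by auto
qed

text \<open>
  The lower bound is attained at the last visit \<open>i \<le> l\<close> of \<open>T\<close> to level
  \<open>K = min (J\<^sub>l, T\<^sub>2\<^sub>n / 2)\<close>: after \<open>i\<close> the path stays above \<open>K\<close>, so \<open>J\<^sub>i = K\<close> and the
  inverse transform takes the value \<open>K\<close> at \<open>i\<close>.
\<close>

lemma running_max_pitman_inv:
  assumes l: "1 \<le> l" "l \<le> 2*n"
  shows "running_max (pitman_inv n T) l = min (future_min n T l) (T!(2*n) div 2)"
    (is "_ = ?K l")
proof (rule antisym)
  show "running_max (pitman_inv n T) l \<le> ?K l"
  proof (subst running_max_le_iff[OF l(1)], intro ballI)
    fix i assume i: "i \<in> {1..l}"
    have "?K i \<le> ?K l" using future_min_mono[of i l n T] i l by auto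
    moreover have "?K i \<le> T!i" using future_min_le_nth[of i i n T] i l by auto
    ultimately show "pitman_inv n T ! i \<le> ?K l" using pitman_inv_nth[of i n T] i l by auto
  qed
next
  have "1 \<le> ?K l" using B'_future_min_pos[OF l] B'_nth_end by auto
  moreover have "?K l \<le> T!l" using future_min_le_nth[of l l n T] l by auto
  ultimately obtain i where i: "i \<le> l" "T!i = ?K l" "\<forall>j. i < j \<and> j \<le> l \<longrightarrow> ?K l < T!j"
    using last_visit_before[of l "\<lambda>j. T!j" "?K l"] walk_path_step[OF B'_walk_path] l B'_nth_0
    by force
  have i1: "1 \<le> i" using i B'_nth_0 \<open>1 \<le> ?K l\<close> by (cases i) auto
  have "?K l \<le> future_min n T i"
  proof (subst future_min_ge_iff, use i l in simp, intro ballI)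
    fix j assume j: "j \<in> {i..2*n}"
    show "?K l \<le> T!j"
    proof (cases "j \<le> l")
      case True
      then show ?thesis using i(2) i(3)[rule_format, of j] j by (cases "j = i") auto
    next
      case False
      then show ?thesis using future_min_le_nth[of l j n T] j by auto
    qed
  qed
  moreover have "future_min n T i \<le> ?K l" using future_min_le_nth[of i i n T] i l by auto
  ultimately have "pitman_inv n T ! i = ?K l"
    using pitman_inv_nth[of i n T] i i1 l by (simp add: min_def)
  then show "?K l \<le> running_max (pitman_inv n T) l"
    using nth_le_running_max[of i l "pitman_inv n T"] i i1 by auto
qed

lemma pitman_pitman_inv: "pitman n (pitman_inv n T) = T"
proof (rule nth_equalityI)
  show "length (pitman n (pitman_inv n T)) = length T"
    using B'_walk_path by (simp add: walk_path_def)
next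
  fix i assume "i < length (pitman n (pitman_inv n T))"
  then have i: "i \<le> 2*n" by simp
  show "pitman n (pitman_inv n T) ! i = T ! i"
  proof (cases "i = 0")
    case True
    then show ?thesis using B'_nth_0 by simp
  next
    case False
    then show ?thesis
      using pitman_nth[of i n] running_max_pitman_inv[of i] pitman_inv_nth[of i n T] i by simp
  qed
qed

end

theorem theorem1:
  fixes n :: nat
  assumes "n > 0"
  shows "(\<forall>S\<in>A' n. \<forall>l\<in>{1..2*n}. \<exists>!m. in_case n S m l)
       \<and> Phi1 n ` A' n \<subseteq> B' n
       \<and> bij_betw (Phi1 n) (A' n) (B' n)"
proof (intro conjI)
  show "\<forall>S\<in>A' n. \<forall>l\<in>{1..2*n}. \<exists>!m. in_case n S m l"
    using in_case_iff_running_max[OF _ assms] by auto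
  have "bij_betw (pitman n) (A' n) (B' n)"
    by (rule bij_betw_byWitness[where f'="pitman_inv n"])
       (use pitman_inv_pitman[OF _ assms] pitman_pitman_inv[OF _ assms]
          pitman_in_B'[OF _ assms] pitman_inv_in_A'[OF _ assms] in auto)
  then show "bij_betw (Phi1 n) (A' n) (B' n)"
    using bij_betw_cong[of "A' n" "Phi1 n" "pitman n"] Phi1_eq_pitman[OF _ assms] by auto
  then show "Phi1 n ` A' n \<subseteq> B' n"
    by (simp add: bij_betw_def)
qed

end
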